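(* Consider the nonlinear program described in the context. Let $x\in\mathcal{C}$ and suppose MFCQ holds at $x$. Then (i) $\mathcal{G}_\alpha(x)\in T_{\mathcal{C}}(x)$ for every $\alpha>0$; and (ii) $\lim_{\alpha\to\infty}\mathcal{G}_\alpha(x)=\Pi_{T_{\mathcal{C}}(x)}(-\nabla f(x))$.
   Context: Let $f:\mathbb{R}^n\to\mathbb{R}$, $g:\mathbb{R}^n\to\mathbb{R}^m$, $h:\mathbb{R}^n\to\mathbb{R}^k$ be continuously differentiable; consider minimize $f(x)$ subject to $g(x)\le0$, $h(x)=0$ with feasible set $\mathcal{C}=\{x:g(x)\le0,h(x)=0\}$; $I_0(x)=\{i:g_i(x)=0\}$. MFCQ at $x$: $\{\nabla h_j(x)\}_{j=1}^k$ linearly independent and some $\xi$ has $\nabla h_j(x)^\top\xi=0$ for all $j$ and $\nabla g_i(x)^\top\xi<0$ for $i\in I_0(x)$. For $\alpha>0$, $\mathcal{G}_\alpha(x)$ is the unique minimizer over $\xi\in\mathbb{R}^n$ of $\frac12\|\xi+\nabla f(x)\|^2$ subject to $\frac{\partial g}{\partial x}(x)\xi\le-\alpha g(x)$, $\frac{\partial h}{\partial x}(x)\xi=-\alpha h(x)$. $T_{\mathcal{C}}(x)$ is the tangent cone: $d\in T_{\mathcal{C}}(x)$ iff there exist $t^\nu\to0^+$, $x^\nu\in\mathcal{C}$, $x^\nu\to x$ with $(x^\nu-x)/t^\nu\to d$ (under MFCQ at $x\in\mathcal{C}$ this equals $\{\xi:\frac{\partial h}{\partial x}(x)\xi=0,\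 \nabla g_i(x)^\top\xi\le0\ \forall i\in I_0(x)\}$, a closed convex cone). $\Pi_{T_{\mathcal{C}}(x)}$ is the Euclidean projection onto $T_{\mathcal{C}}(x)$. *)

theory Defs
  imports "HOL-Analysis.Analysis"
begin

definition grad :: "('a::euclidean_space \<Rightarrow> real) \<Rightarrow> 'a \<Rightarrow> 'a" where
  "grad f x = (\<Sum>b\<in>Basis. frechet_derivative f (at x) b *\<^sub>R b)"

definition C1_fun :: "('a::euclidean_space \<Rightarrow> real) \<Rightarrow> bool" where
  "C1_fun f \<longleftrightarrow> (\<forall>x. f differentiable (at x)) \<and> continuous_on UNIV (grad f)"

definition feasible_set ::
  "nat \<Rightarrow> (nat \<Rightarrow> 'a::euclidean_space \<Rightarrow> real) \<Rightarrow> nat \<Rightarrow> (nat \<Rightarrow> 'a \<Rightarrow> real) \<Rightarrow> 'a set" where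
  "feasible_set m g k h = {x. (\<forall>i<m. g i x \<le> 0) \<and> (\<forall>j<k. h j x = 0)}"

definition active_set :: "nat \<Rightarrow> (nat \<Rightarrow> 'a \<Rightarrow> real) \<Rightarrow> 'a \<Rightarrow> nat set" where
  "active_set m g x = {i. i < m \<and> g i x = 0}"

definition MFCQ ::
  "nat \<Rightarrow> (nat \<Rightarrow> 'a::euclidean_space \<Rightarrow> real) \<Rightarrow> nat \<Rightarrow> (nat \<Rightarrow> 'a \<Rightarrow> real) \<Rightarrow> 'a \<Rightarrow> bool" where
  "MFCQ m g k h x \<longleftrightarrow>
     inj_on (\<lambda>j. grad (h j) x) {..<k} \<and> independent ((\<lambda>j. grad (h j) x) ` {..<k}) \<and>
     (\<exists>\<xi>. (\<forall>j<k. grad (h j) x \<bullet> \<xi> = 0) \<and> (\<forall>i\<in>active_set m g x. grad (g i) x \<bullet> \<xi> < 0))"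

definition qp_feasible ::
  "nat \<Rightarrow> (nat \<Rightarrow> 'a::euclidean_space \<Rightarrow> real) \<Rightarrow> nat \<Rightarrow> (nat \<Rightarrow> 'a \<Rightarrow> real) \<Rightarrow> real \<Rightarrow> 'a \<Rightarrow> 'a set" where
  "qp_feasible m g k h \<alpha> x =
     {\<xi>. (\<forall>i<m. grad (g i) x \<bullet> \<xi> \<le> - \<alpha> * g i x) \<and> (\<forall>j<k. grad (h j) x \<bullet> \<xi> = - \<alpha> * h j x)}"

definition G_alpha ::
  "('a::euclidean_space \<Rightarrow> real) \<Rightarrow> nat \<Rightarrow> (nat \<Rightarrow> 'a \<Rightarrow> real) \<Rightarrow> nat \<Rightarrow> (nat \<Rightarrow> 'a \<Rightarrow> real) \<Rightarrow> real \<Rightarrow> 'a \<Rightarrow> 'a" where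
  "G_alpha f m g k h \<alpha> x =
     (THE \<xi>. \<xi> \<in> qp_feasible m g k h \<alpha> x \<and>
        (\<forall>\<eta>\<in>qp_feasible m g k h \<alpha> x.
           (1/2) * (norm (\<xi> + grad f x))\<^sup>2 \<le> (1/2) * (norm (\<eta> + grad f x))\<^sup>2))"

definition tangent_cone :: "'a::real_normed_vector set \<Rightarrow> 'a \<Rightarrow> 'a set" where
  "tangent_cone C x = {d. \<exists>t xs. (\<forall>\<nu>. t \<nu> > (0::real)) \<and> t \<longlonglongrightarrow> 0 \<and>
       (\<forall>\<nu>. xs \<nu> \<in> C) \<and> xs \<longlonglongrightarrow> x \<and> (\<lambda>\<nu>. (1 / t \<nu>) *\<^sub>R (xs \<nu> - x)) \<longlonglongrightarrow> d}"

end

theory Submission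
  imports Defs
begin

(* Under MFCQ the tangent cone of the feasible set equals the linearized cone
   L = {v. grad h_j(x) . v = 0 for all j, grad g_i(x) . v <= 0 for active i}.
   The inclusion into L is first-order optimality of x for g_i and +-h_j over the feasible set.
   Conversely, a direction d satisfying the active inequalities strictly is tangent: an open mapping
   (Lyusternik) argument moves x + t d onto the equality constraints at cost o(t), and the strict
   inequalities survive this; every d in L is a limit of such directions along the MFCQ vector, and
   tangent cones are closed.
   The feasible set Q_alpha of the quadratic program is a closed convex polyhedron with
   0 in Q_alpha and Q_alpha inside L, so G_alpha(x), the projection of -grad f(x) onto Q_alpha, is
   tangent. A fixed p in L lies in Q_alpha once alpha is large, since only the inactive constraints,
   where g_i(x) < 0, restrict p and they relax linearly in alpha. Hence for large alpha the
   projection of -grad f(x) onto L already lies in Q_alpha and is also the projection onto Q_alpha: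
   G_alpha(x) is eventually equal to the limit. *)

lemma has_derivative_grad:
  fixes f :: "'a::euclidean_space \<Rightarrow> real"
  assumes "f differentiable (at x)"
  shows "(f has_derivative (\<lambda>v. grad f x \<bullet> v)) (at x)"
proof -
  let ?D = "frechet_derivative f (at x)"
  have D: "(f has_derivative ?D) (at x)"
    using assms frechet_derivative_works by blast
  have "?D = (\<lambda>v. grad f x \<bullet> v)"
  proof
    fix v
    have "?D v = ?D (\<Sum>b\<in>Basis. (v \<bullet> b) *\<^sub>R b)"
      by (simp add: euclidean_representation)
    also have "\<dots> = (\<Sum>b\<in>Basis. (v \<bullet> b) * ?D b)"
      using has_derivative_linear[OF D] by (simp add: linear_sum linear_scale)
    also have "\<dots> = grad f x \<bullet> v"
      unfolding grad_def by (simp add: inner_sum_right inner_commute mult.commute)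
    finally show "?D v = grad f x \<bullet> v" .
  qed
  with D show ?thesis
    by simp
qed

lemma C1_fun_differentiable: "C1_fun f \<Longrightarrow> f differentiable (at x)"
  unfolding C1_fun_def by blast

lemma C1_fun_continuous_on: "C1_fun f \<Longrightarrow> continuous_on S f"
  unfolding C1_fun_def
  by (intro continuous_at_imp_continuous_on ballI differentiable_imp_continuous_within) blast

section \<open>Tangent cones\<close>

lemma tangent_coneE:
  fixes C :: "'a::real_normed_vector set"
  assumes "d \<in> tangent_cone C x" and "\<eta> > 0" and "\<delta> > 0"
  obtains t y where "t \<in> {0<..<\<delta>}" "y \<in> C" "norm (y - x - t *\<^sub>R d) \<le> \<eta> * t"
proof -
  obtain t xs where t_pos: "\<And>n. t n > 0" and t_lim: "t \<longlonglongrightarrow> 0"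
    and xs_in: "\<And>n. xs n \<in> C" and quot_lim: "(\<lambda>n. (1 / t n) *\<^sub>R (xs n - x)) \<longlonglongrightarrow> d"
    using assms(1) unfolding tangent_cone_def by blast
  have "\<forall>\<^sub>F n in sequentially. t n < \<delta> \<and> dist ((1 / t n) *\<^sub>R (xs n - x)) d < \<eta>"
    using order_tendstoD(2)[OF t_lim \<open>\<delta> > 0\<close>] tendstoD[OF quot_lim \<open>\<eta> > 0\<close>]
    by eventually_elim simp
  then obtain n where n: "t n < \<delta>" "norm ((1 / t n) *\<^sub>R (xs n - x) - d) < \<eta>"
    unfolding eventually_sequentially dist_norm by blast
  have "xs n - x - t n *\<^sub>R d = t n *\<^sub>R ((1 / t n) *\<^sub>R (xs n - x) - d)"
    using t_pos[of n] by (simp add: algebra_simps)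
  then have "norm (xs n - x - t n *\<^sub>R d) \<le> \<eta> * t n"
    using n(2) t_pos[of n] by simp
  then show thesis
    using that n(1) t_pos[of n] xs_in[of n] by auto
qed

lemma tangent_cone_sequentialI:
  fixes C :: "'a::real_normed_vector set"
  assumes t_pos: "\<And>n. t n > 0" and xs_in: "\<And>n. xs n \<in> C" and t_lim: "t \<longlonglongrightarrow> 0"
    and quot_lim: "(\<lambda>n. (1 / t n) *\<^sub>R (xs n - x)) \<longlonglongrightarrow> d"
  shows "d \<in> tangent_cone C x"
proof -
  have "(\<lambda>n. t n *\<^sub>R ((1 / t n) *\<^sub>R (xs n - x))) \<longlonglongrightarrow> 0 *\<^sub>R d"
    by (intro tendsto_scaleR t_lim quot_lim)
  moreover have "t n *\<^sub>R ((1 / t n) *\<^sub>R (xs n - x)) = xs n - x" for n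
    using t_pos[of n] by simp
  ultimately have "xs \<longlonglongrightarrow> x"
    by (simp add: LIM_zero_iff)
  then show ?thesis
    unfolding tangent_cone_def using t_pos t_lim xs_in quot_lim by blast
qed

lemma tangent_coneI:
  fixes C :: "'a::real_normed_vector set"
  assumes approx: "\<And>\<eta> \<delta>. \<eta> > 0 \<Longrightarrow> \<delta> > 0 \<Longrightarrow> \<exists>t\<in>{0<..<\<delta>}. \<exists>y\<in>C. norm (y - x - t *\<^sub>R d) \<le> \<eta> * t"
  shows "d \<in> tangent_cone C x"
proof -
  have "\<forall>n. \<exists>t\<in>{0<..<1 / real (Suc n)}. \<exists>y\<in>C. norm (y - x - t *\<^sub>R d) \<le> 1 / real (Suc n) * t"
    by (intro allI approx) simp_all
  then obtain t where t: "\<And>n. t n \<in> {0<..<1 / real (Suc n)}"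
    and "\<forall>n. \<exists>y\<in>C. norm (y - x - t n *\<^sub>R d) \<le> 1 / real (Suc n) * t n"
    unfolding Bex_def by (auto dest!: choice)
  then obtain xs where xs_in: "\<And>n. xs n \<in> C"
    and close: "\<And>n. norm (xs n - x - t n *\<^sub>R d) \<le> 1 / real (Suc n) * t n"
    unfolding Bex_def by (auto dest!: choice)
  have t_pos: "t n > 0" for n
    using t[of n] by simp
  have bound_lim: "(\<lambda>n. 1 / real (Suc n)) \<longlonglongrightarrow> 0"
    using LIMSEQ_inverse_real_of_nat by (simp add: inverse_eq_divide)
  have t_lim: "t \<longlonglongrightarrow> 0"
  proof (rule Lim_null_comparison[OF always_eventually bound_lim], rule allI)
    show "norm (t n) \<le> 1 / real (Suc n)" for n
      using t[of n] by simp
  qed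
  have quot_lim: "(\<lambda>n. (1 / t n) *\<^sub>R (xs n - x)) \<longlonglongrightarrow> d"
  proof (rule LIM_zero_cancel, rule Lim_null_comparison[OF always_eventually bound_lim], rule allI)
    fix n
    have "(1 / t n) *\<^sub>R (xs n - x) - d = (1 / t n) *\<^sub>R (xs n - x - t n *\<^sub>R d)"
      using t_pos[of n] by (simp add: scaleR_diff_right)
    then have "norm ((1 / t n) *\<^sub>R (xs n - x) - d) = norm (xs n - x - t n *\<^sub>R d) / t n"
      using t_pos[of n] by simp
    also have "\<dots> \<le> 1 / real (Suc n)"
      using close[of n] t_pos[of n] by (simp add: divide_le_eq)
    finally show "norm ((1 / t n) *\<^sub>R (xs n - x) - d) \<le> 1 / real (Suc n)" .
  qed
  show ?thesis
    by (rule tangent_cone_sequentialI[OF t_pos xs_in t_lim quot_lim])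
qed

lemma closed_tangent_cone:
  fixes C :: "'a::real_normed_vector set"
  shows "closed (tangent_cone C x)"
  unfolding closed_limpt
proof (intro allI impI)
  fix d
  assume "d islimpt tangent_cone C x"
  show "d \<in> tangent_cone C x"
  proof (rule tangent_coneI)
    fix \<eta> \<delta> :: real
    assume "\<eta> > 0" "\<delta> > 0"
    have "\<eta> / 2 > 0"
      using \<open>\<eta> > 0\<close> by simp
    then obtain d' where d': "d' \<in> tangent_cone C x" "dist d' d < \<eta> / 2"
      using \<open>d islimpt _\<close> unfolding islimpt_approachable by blast
    obtain t y where t: "t \<in> {0<..<\<delta>}" and "y \<in> C"
      and close: "norm (y - x - t *\<^sub>R d') \<le> \<eta> / 2 * t"
      using tangent_coneE[OF d'(1) \<open>\<eta> / 2 > 0\<close> \<open>\<delta> > 0\<close>] .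
    have "y - x - t *\<^sub>R d = (y - x - t *\<^sub>R d') + t *\<^sub>R (d' - d)"
      by (simp add: algebra_simps)
    then have "norm (y - x - t *\<^sub>R d) \<le> norm (y - x - t *\<^sub>R d') + norm (t *\<^sub>R (d' - d))"
      by (metis norm_triangle_ineq)
    also have "\<dots> \<le> \<eta> / 2 * t + \<eta> / 2 * t"
    proof (rule add_mono[OF close])
      show "norm (t *\<^sub>R (d' - d)) \<le> \<eta> / 2 * t"
        using t d'(2) by (simp add: dist_norm mult.commute)
    qed
    finally show "\<exists>t\<in>{0<..<\<delta>}. \<exists>y\<in>C. norm (y - x - t *\<^sub>R d) \<le> \<eta> * t"
      using t \<open>y \<in> C\<close> by auto
  qed
qed

section \<open>First-order estimates along a ray\<close>

lemma eventually_prod_at_right_0E: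
  fixes P :: "real \<Rightarrow> real \<Rightarrow> bool"
  assumes "\<forall>\<^sub>F (\<epsilon>, t) in at_right 0 \<times>\<^sub>F at_right 0. P \<epsilon> t" and "\<eta> > 0"
  obtains \<epsilon> \<delta> where "\<epsilon> \<in> {0<..<\<eta>}" "\<delta> > 0" "\<And>t. t \<in> {0<..<\<delta>} \<Longrightarrow> P \<epsilon> t"
proof -
  obtain P\<^sub>\<epsilon> P\<^sub>t where "eventually P\<^sub>\<epsilon> (at_right 0)" "eventually P\<^sub>t (at_right 0)"
    and P: "\<And>\<epsilon> t. P\<^sub>\<epsilon> \<epsilon> \<Longrightarrow> P\<^sub>t t \<Longrightarrow> P \<epsilon> t"
    using assms(1) unfolding eventually_prod_filter by auto
  then obtain a \<delta> where "a > 0" "\<And>\<epsilon>. 0 < \<epsilon> \<Longrightarrow> \<epsilon> < a \<Longrightarrow> P\<^sub>\<epsilon> \<epsilon>"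
    and "\<delta> > 0" "\<And>t. 0 < t \<Longrightarrow> t < \<delta> \<Longrightarrow> P\<^sub>t t"
    unfolding eventually_at_right_field by auto
  moreover have "min a \<eta> / 2 \<in> {0<..<\<eta>}" "min a \<eta> / 2 < a"
    using \<open>a > 0\<close> assms(2) by auto
  ultimately show thesis
    using P by (intro that[of "min a \<eta> / 2" \<delta>]) auto
qed

lemma eventually_prod_filterI:
  assumes "eventually P F" and "eventually Q G" and "\<And>x y. P x \<Longrightarrow> Q y \<Longrightarrow> R x y"
  shows "\<forall>\<^sub>F (x, y) in F \<times>\<^sub>F G. R x y"
  unfolding eventually_prod_filter using assms by auto

lemma norm_diff_le_near_ray:
  fixes x y d :: "'a::real_normed_vector"
  assumes "norm (y - x - t *\<^sub>R d) \<le> \<epsilon> * t" and "\<epsilon> \<le> 1" and "t \<ge> 0"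
  shows "norm (y - x) \<le> t * (norm d + 1)"
proof -
  have "norm (y - x) \<le> norm (t *\<^sub>R d) + norm (y - x - t *\<^sub>R d)"
    by (rule norm_triangle_sub)
  also have "\<dots> \<le> t * norm d + 1 * t"
    using assms mult_right_mono[of \<epsilon> 1 t] by (intro add_mono) simp_all
  finally show ?thesis
    by (simp add: algebra_simps)
qed

lemma inner_diff_near_ray_le:
  fixes x y d b :: "'a::real_inner"
  assumes "norm (y - x - t *\<^sub>R d) \<le> \<epsilon> * t"
  shows "\<bar>b \<bullet> (y - x) - t * (b \<bullet> d)\<bar> \<le> norm b * \<epsilon> * t"
proof -
  have "\<bar>b \<bullet> (y - x - t *\<^sub>R d)\<bar> \<le> norm b * norm (y - x - t *\<^sub>R d)"
    by (rule Cauchy_Schwarz_ineq2)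
  also have "\<dots> \<le> norm b * (\<epsilon> * t)"
    using assms by (simp add: mult_left_mono)
  finally show ?thesis
    by (simp add: inner_diff_right mult.assoc)
qed

lemma has_derivative_near_ray:
  fixes \<phi> :: "'a::real_inner \<Rightarrow> real"
  assumes \<phi>: "(\<phi> has_derivative (\<lambda>v. b \<bullet> v)) (at x)" and "\<gamma> > 0"
  shows "\<forall>\<^sub>F (\<epsilon>, t) in at_right 0 \<times>\<^sub>F at_right 0.
    \<forall>y. norm (y - x - t *\<^sub>R d) \<le> \<epsilon> * t \<longrightarrow> \<bar>\<phi> y - \<phi> x - t * (b \<bullet> d)\<bar> \<le> \<gamma> * t"
proof -
  have "norm d + 1 > 0"
    using norm_ge_zero[of d] by linarith
  then have c_pos: "\<gamma> / 2 / (norm d + 1) > 0"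
    using \<open>\<gamma> > 0\<close> by simp
  then obtain r where "r > 0" and remainder: "\<And>y. norm (y - x) < r \<Longrightarrow>
      norm (\<phi> y - \<phi> x - b \<bullet> (y - x)) \<le> \<gamma> / 2 / (norm d + 1) * norm (y - x)"
    using \<phi> unfolding has_derivative_at_alt by blast
  have lim: "((\<lambda>\<epsilon>. \<epsilon>) \<longlongrightarrow> 0) (at_right (0::real))"
    by (rule tendsto_ident_at)
  have lim_b: "((\<lambda>\<epsilon>. norm b * \<epsilon>) \<longlongrightarrow> 0) (at_right 0)"
    using tendsto_mult_left[OF lim, of "norm b"] by simp
  have lim_d: "((\<lambda>t. t * (norm d + 1)) \<longlongrightarrow> 0) (at_right 0)"
    using tendsto_mult_right[OF lim, of "norm d + 1"] by simp
  have "\<gamma> / 2 > 0"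
    using \<open>\<gamma> > 0\<close> by simp
  have "\<forall>\<^sub>F \<epsilon> in at_right 0. \<epsilon> < 1 \<and> norm b * \<epsilon> < \<gamma> / 2"
    by (rule eventually_conj[OF order_tendstoD(2)[OF lim zero_less_one] order_tendstoD(2)[OF lim_b \<open>\<gamma> / 2 > 0\<close>]])
  moreover have "\<forall>\<^sub>F t in at_right 0. 0 < t \<and> t * (norm d + 1) < r"
    by (rule eventually_conj[OF eventually_at_right_less order_tendstoD(2)[OF lim_d \<open>r > 0\<close>]])
  ultimately show ?thesis
  proof (rule eventually_prod_filterI)
    fix \<epsilon> t :: real
    assume \<epsilon>: "\<epsilon> < 1 \<and> norm b * \<epsilon> < \<gamma> / 2" and t: "0 < t \<and> t * (norm d + 1) < r"
    show "\<forall>y. norm (y - x - t *\<^sub>R d) \<le> \<epsilon> * t \<longrightarrow> \<bar>\<phi> y - \<phi> x - t * (b \<bullet> d)\<bar> \<le> \<gamma> * t"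
    proof (intro allI impI)
      fix y
      assume y: "norm (y - x - t *\<^sub>R d) \<le> \<epsilon> * t"
      have yx: "norm (y - x) \<le> t * (norm d + 1)"
        using \<epsilon> t by (intro norm_diff_le_near_ray[OF y]) auto
      with t have "norm (\<phi> y - \<phi> x - b \<bullet> (y - x)) \<le> \<gamma> / 2 / (norm d + 1) * norm (y - x)"
        by (intro remainder) simp
      also have "\<dots> \<le> \<gamma> / 2 / (norm d + 1) * (t * (norm d + 1))"
        using c_pos by (intro mult_left_mono[OF yx]) simp
      also have "\<dots> = \<gamma> / 2 * t"
        using \<open>norm d + 1 > 0\<close> by (simp add: field_simps)
      finally have first_order: "\<bar>\<phi> y - \<phi> x - b \<bullet> (y - x)\<bar> \<le> \<gamma> / 2 * t"
        by simp
      have "norm b * \<epsilon> * t \<le> \<gamma> / 2 * t"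
        using \<epsilon> t by (simp add: mult_right_mono)
      with inner_diff_near_ray_le[OF y, of b]
      have "\<bar>b \<bullet> (y - x) - t * (b \<bullet> d)\<bar> \<le> \<gamma> / 2 * t"
        by linarith
      with first_order show "\<bar>\<phi> y - \<phi> x - t * (b \<bullet> d)\<bar> \<le> \<gamma> * t"
        by linarith
    qed
  qed
qed

lemma max_on_imp_inner_tangent_cone_le_0:
  fixes \<phi> :: "'a::real_inner \<Rightarrow> real"
  assumes \<phi>: "(\<phi> has_derivative (\<lambda>v. b \<bullet> v)) (at x)"
    and max: "\<And>y. y \<in> C \<Longrightarrow> \<phi> y \<le> \<phi> x"
    and d: "d \<in> tangent_cone C x"
  shows "b \<bullet> d \<le> 0"
proof (rule ccontr)
  assume "\<not> b \<bullet> d \<le> 0"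
  then have "b \<bullet> d / 2 > 0"
    by simp
  from has_derivative_near_ray[OF \<phi> this, where d = d]
  obtain \<epsilon> \<delta> where "\<epsilon> \<in> {0<..<1}" "\<delta> > 0" and near: "\<And>t. t \<in> {0<..<\<delta>} \<Longrightarrow>
      \<forall>y. norm (y - x - t *\<^sub>R d) \<le> \<epsilon> * t \<longrightarrow> \<bar>\<phi> y - \<phi> x - t * (b \<bullet> d)\<bar> \<le> b \<bullet> d / 2 * t"
    by (rule eventually_prod_at_right_0E[OF _ zero_less_one]) auto
  moreover from \<open>\<epsilon> \<in> {0<..<1}\<close> have "\<epsilon> > 0"
    by simp
  ultimately obtain t y where t: "t \<in> {0<..<\<delta>}" and "y \<in> C" and "norm (y - x - t *\<^sub>R d) \<le> \<epsilon> * t"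
    using tangent_coneE[OF d] by blast
  then have "\<bar>\<phi> y - \<phi> x - t * (b \<bullet> d)\<bar> \<le> b \<bullet> d / 2 * t"
    using near[OF t] by blast
  then have "\<phi> y - \<phi> x \<ge> t * (b \<bullet> d) - b \<bullet> d / 2 * t"
    using abs_le_D2 by fastforce
  moreover have "t * (b \<bullet> d) - b \<bullet> d / 2 * t > 0"
    using t \<open>b \<bullet> d / 2 > 0\<close> by (simp add: algebra_simps)
  ultimately show False
    using max[OF \<open>y \<in> C\<close>] by linarith
qed

lemma inequality_constraint_near_ray:
  fixes \<phi> :: "'a::real_inner \<Rightarrow> real"
  assumes \<phi>: "(\<phi> has_derivative (\<lambda>v. b \<bullet> v)) (at x)"
    and "\<phi> x \<le> 0" and active: "\<phi> x = 0 \<Longrightarrow> b \<bullet> d < 0"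
  shows "\<forall>\<^sub>F (\<epsilon>, t) in at_right 0 \<times>\<^sub>F at_right 0. \<forall>y. norm (y - x - t *\<^sub>R d) \<le> \<epsilon> * t \<longrightarrow> \<phi> y \<le> 0"
proof (cases "\<phi> x = 0")
  case True
  then have "- (b \<bullet> d) > 0"
    using active by simp
  from has_derivative_near_ray[OF \<phi> this, where d = d] show ?thesis
    by eventually_elim (auto simp: True abs_le_iff)
next
  case False
  then have "\<phi> x < 0"
    using \<open>\<phi> x \<le> 0\<close> by simp
  have "((\<lambda>t. \<phi> x + t * (b \<bullet> d + 1)) \<longlongrightarrow> \<phi> x + 0 * (b \<bullet> d + 1)) (at_right 0)"
    by (intro tendsto_intros)
  then have "\<forall>\<^sub>F t in at_right 0. \<phi> x + t * (b \<bullet> d + 1) < 0"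
    using \<open>\<phi> x < 0\<close> by (simp add: order_tendstoD(2))
  then have "\<forall>\<^sub>F (\<epsilon>::real, t) in at_right 0 \<times>\<^sub>F at_right 0. \<phi> x + t * (b \<bullet> d + 1) < 0"
    by (rule eventually_prod2[OF trivial_limit_at_right_real, THEN iffD2])
  moreover note has_derivative_near_ray[OF \<phi> zero_less_one, where d = d]
  ultimately show ?thesis
    by eventually_elim (auto simp: abs_le_iff algebra_simps)
qed

section \<open>Moving onto equality constraints\<close>

lemma independent_family_sum_orthogonal_coeffs_eq_0:
  fixes a :: "'i \<Rightarrow> 'a::euclidean_space"
  assumes inj: "inj_on a I" and indep: "independent (a ` I)"
    and orth: "\<And>j. j \<in> I \<Longrightarrow> a j \<bullet> u = 0" and sum: "(\<Sum>j\<in>I. c j *\<^sub>R a j) = u"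
    and "j \<in> I"
  shows "c j = 0"
proof -
  have "u \<in> span (a ` I)"
    unfolding sum[symmetric] by (intro span_sum span_scale span_base) simp
  moreover have "orthogonal u w" if "w \<in> a ` I" for w
    using that orth by (auto simp: orthogonal_def inner_commute)
  ultimately have "orthogonal u u"
    by (rule orthogonal_to_span)
  then have u0: "u = 0"
    by (simp add: orthogonal_def)
  define c' where "c' w = c (inv_into I a w)" for w
  have "(\<Sum>w\<in>a ` I. c' w *\<^sub>R w) = (\<Sum>j\<in>I. c' (a j) *\<^sub>R a j)"
    by (rule sum.reindex[OF inj, unfolded comp_def])
  also have "\<dots> = u"
    unfolding sum[symmetric] by (rule sum.cong) (simp_all add: c'_def inv_into_f_f[OF inj])
  finally have "\<forall>w\<in>a ` I. c' w = 0"
    using indep u0 unfolding independent_explicit by blast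
  then show ?thesis
    using \<open>j \<in> I\<close> by (simp add: c'_def inv_into_f_f[OF inj])
qed

lemma subspace_obtain_linear_inj_on:
  fixes N :: "'a::euclidean_space set"
  assumes "subspace N"
  obtains P :: "'a \<Rightarrow> 'a" where "linear P" "\<And>v. P v \<in> N" "\<And>v. v \<in> N \<Longrightarrow> P v = 0 \<Longrightarrow> v = 0"
proof -
  obtain B where B: "B \<subseteq> N" "independent B" "N \<subseteq> span B"
    by (rule basis_exists)
  have "finite B"
    using independent_bound[OF B(2)] by blast
  define P where "P v = (\<Sum>b\<in>B. (v \<bullet> b) *\<^sub>R b)" for v
  have "linear P"
    unfolding P_def
    by (rule linearI) (simp_all add: inner_add_left scaleR_add_left sum.distrib scaleR_sum_right)
  moreover have "P v \<in> N" for v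
    unfolding P_def using B(1) \<open>subspace N\<close> by (intro subspace_sum subspace_scale) auto
  moreover have "v = 0" if "v \<in> N" "P v = 0" for v
  proof -
    have "(\<Sum>b\<in>B. (v \<bullet> b)\<^sup>2) = v \<bullet> P v"
      unfolding P_def by (simp add: inner_sum_right power2_eq_square)
    then have "\<forall>b\<in>B. v \<bullet> b = 0"
      using \<open>P v = 0\<close> \<open>finite B\<close> by (simp add: sum_nonneg_eq_0_iff)
    then have "orthogonal v w" if "w \<in> B" for w
      using that by (simp add: orthogonal_def)
    then have "orthogonal v v"
      using orthogonal_to_span[of v B v] B(3) \<open>v \<in> N\<close> by blast
    then show "v = 0"
      by (simp add: orthogonal_def)
  qed
  ultimately show thesis
    using that by blast
qed

lemma independent_obtain_complement_map:
  fixes a :: "nat \<Rightarrow> 'a::euclidean_space"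
  assumes inj: "inj_on a {..<k}" and indep: "independent (a ` {..<k})"
  obtains P :: "'a \<Rightarrow> 'a" where "linear P"
    "inj (\<lambda>v. (\<Sum>j<k. (a j \<bullet> v) *\<^sub>R a j) + P v)"
    "\<And>c w j. (\<Sum>j<k. c j *\<^sub>R a j) = P w \<Longrightarrow> j < k \<Longrightarrow> c j = 0"
proof -
  let ?N = "{v. \<forall>j<k. a j \<bullet> v = 0}"
  have "subspace ?N"
    by (auto simp: subspace_def inner_add_right)
  then obtain P :: "'a \<Rightarrow> 'a" where "linear P" and P_in: "\<And>v. P v \<in> ?N"
    and P_inj: "\<And>v. v \<in> ?N \<Longrightarrow> P v = 0 \<Longrightarrow> v = 0"
    by (rule subspace_obtain_linear_inj_on) auto
  have coeffs_0: "c j = 0" if "(\<Sum>j<k. c j *\<^sub>R a j) = P w" "j < k" for c w j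
    using independent_family_sum_orthogonal_coeffs_eq_0[OF inj indep, of "P w" c j] P_in[of w] that
    by simp
  have lin: "linear (\<lambda>v. (\<Sum>j<k. (a j \<bullet> v) *\<^sub>R a j) + P v)"
  proof (rule linearI)
    show "(\<Sum>j<k. (a j \<bullet> (u + v)) *\<^sub>R a j) + P (u + v) =
        ((\<Sum>j<k. (a j \<bullet> u) *\<^sub>R a j) + P u) + ((\<Sum>j<k. (a j \<bullet> v) *\<^sub>R a j) + P v)" for u v
      using \<open>linear P\<close> by (simp add: inner_add_right scaleR_add_left sum.distrib linear_add)
    show "(\<Sum>j<k. (a j \<bullet> (c *\<^sub>R v)) *\<^sub>R a j) + P (c *\<^sub>R v) =
        c *\<^sub>R ((\<Sum>j<k. (a j \<bullet> v) *\<^sub>R a j) + P v)" for c v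
      using \<open>linear P\<close> by (simp add: scaleR_sum_right scaleR_add_right linear_scale)
  qed
  have "v = 0" if "(\<Sum>j<k. (a j \<bullet> v) *\<^sub>R a j) + P v = 0" for v
  proof -
    have "(\<Sum>j<k. (a j \<bullet> v) *\<^sub>R a j) = P (- v)"
      using that \<open>linear P\<close> by (simp add: linear_neg eq_neg_iff_add_eq_0)
    then have "v \<in> ?N"
      using coeffs_0[of "\<lambda>j. a j \<bullet> v"] by simp
    moreover from this have "P v = 0"
      using that by simp
    ultimately show "v = 0"
      by (rule P_inj)
  qed
  then have "inj (\<lambda>v. (\<Sum>j<k. (a j \<bullet> v) *\<^sub>R a j) + P v)"
    unfolding linear_injective_0[OF lin] by blast
  from \<open>linear P\<close> this coeffs_0 show thesis
    by (rule that)
qed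

lemma norm_diff_le_of_relative_error:
  fixes u w :: "'a::real_normed_vector"
  assumes "norm (u - w) \<le> m * norm u" and "0 \<le> m" and "m \<le> 1 / 2"
  shows "norm (u - w) \<le> 2 * m * norm w"
proof -
  have "norm u \<le> norm w + norm (u - w)"
    by (rule norm_triangle_sub)
  also have "\<dots> \<le> norm w + 1 / 2 * norm u"
    using assms mult_right_mono[of m "1 / 2" "norm u"] by simp
  finally have "norm u \<le> 2 * norm w"
    by simp
  then have "m * norm u \<le> m * (2 * norm w)"
    using \<open>0 \<le> m\<close> by (rule mult_left_mono)
  with assms(1) show ?thesis
    by simp
qed

lemma linear_inj_obtain_bounded_inverse:
  fixes f :: "'a::euclidean_space \<Rightarrow> 'a"
  assumes "linear f" and "inj f"
  obtains g K where "linear g" "g \<circ> f = id" "f \<circ> g = id" "K > 0" "\<And>v. norm (g v) \<le> norm v * K"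
proof -
  obtain g where "linear g" and "g \<circ> f = id"
    using linear_injective_left_inverse assms by blast
  moreover from this have "f \<circ> g = id"
    using linear_inverse_left \<open>linear f\<close> by blast
  moreover obtain K where "K > 0" "\<And>v. norm (g v) \<le> norm v * K"
    using \<open>linear g\<close> linear_conv_bounded_linear bounded_linear.pos_bounded by blast
  ultimately show thesis
    using that by blast
qed

lemma deviation_from_ray_le:
  assumes "linear G" and G_left: "G \<circ> \<Psi>' = id" and K: "\<And>v. norm (G v) \<le> norm v * K"
    and remainder: "norm (\<Psi> y - \<Psi> x - \<Psi>' (y - x)) \<le> \<eta> * norm (y - x)" and "K \<ge> 0"
    and y: "\<Psi> y = \<Psi> x + t *\<^sub>R \<Psi>' d"
  shows "norm (y - x - t *\<^sub>R d) \<le> \<eta> * K * norm (y - x)"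
proof -
  have "y - x - t *\<^sub>R d = G (\<Psi>' (y - x) - t *\<^sub>R \<Psi>' d)"
    using G_left \<open>linear G\<close> by (simp add: linear_diff linear_scale pointfree_idE)
  also have "\<Psi>' (y - x) - t *\<^sub>R \<Psi>' d = - (\<Psi> y - \<Psi> x - \<Psi>' (y - x))"
    using y by simp
  finally have "norm (y - x - t *\<^sub>R d) \<le> norm (\<Psi> y - \<Psi> x - \<Psi>' (y - x)) * K"
    using K[of "- (\<Psi> y - \<Psi> x - \<Psi>' (y - x))"] by (simp add: norm_minus_commute)
  also have "\<dots> \<le> \<eta> * norm (y - x) * K"
    using remainder \<open>K \<ge> 0\<close> by (rule mult_right_mono)
  finally show ?thesis
    by (simp add: mult_ac)
qed

lemma has_derivative_inj_preimage_near_ray: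
  fixes \<Psi> :: "'a::euclidean_space \<Rightarrow> 'a"
  assumes cont: "continuous_on UNIV \<Psi>" and \<Psi>: "(\<Psi> has_derivative \<Psi>') (at x)"
    and "inj \<Psi>'" and "\<epsilon> > 0"
  shows "\<forall>\<^sub>F t in at_right 0. \<exists>y. \<Psi> y = \<Psi> x + t *\<^sub>R \<Psi>' d \<and> norm (y - x - t *\<^sub>R d) \<le> \<epsilon> * t"
proof -
  obtain G K where G: "linear G" "G \<circ> \<Psi>' = id" "\<Psi>' \<circ> G = id"
    and "K > 0" and K: "\<And>v. norm (G v) \<le> norm v * K"
    by (rule linear_inj_obtain_bounded_inverse[OF has_derivative_linear[OF \<Psi>] \<open>inj \<Psi>'\<close>]) auto
  define m where "m = min (1 / 2) (\<epsilon> / (2 * (norm d + 1)))"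
  have d_pos: "0 < 2 * (norm d + 1)"
    using norm_ge_zero[of d] by (simp add: add_nonneg_pos)
  then have "m > 0"
    using \<open>\<epsilon> > 0\<close> by (simp add: m_def)
  have m_half: "m \<le> 1 / 2"
    unfolding m_def by (rule min.cobounded1)
  have "m \<le> \<epsilon> / (2 * (norm d + 1))"
    unfolding m_def by (rule min.cobounded2)
  then have m_d: "m * (2 * (norm d + 1)) \<le> \<epsilon>"
    using d_pos by (simp only: pos_le_divide_eq)
  from \<open>m > 0\<close> \<open>K > 0\<close> have "m / K > 0"
    by simp
  then obtain r where "r > 0" and remainder: "\<And>y. norm (y - x) < r \<Longrightarrow>
      norm (\<Psi> y - \<Psi> x - \<Psi>' (y - x)) \<le> m / K * norm (y - x)"
    using \<Psi> unfolding has_derivative_at_alt by blast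
  have preimage: "\<exists>y. \<Psi> y = \<Psi> x + t *\<^sub>R \<Psi>' d \<and> norm (y - x - t *\<^sub>R d) \<le> \<epsilon> * t"
    if "t > 0" and image: "\<Psi> x + t *\<^sub>R \<Psi>' d \<in> \<Psi> ` ball x r" for t
  proof -
    obtain y where "y \<in> ball x r" and y: "\<Psi> y = \<Psi> x + t *\<^sub>R \<Psi>' d"
      using image by (metis imageE)
    then have "norm (y - x) < r"
      by (simp add: dist_norm norm_minus_commute)
    then have "norm (y - x - t *\<^sub>R d) \<le> m / K * K * norm (y - x)"
      using \<open>K > 0\<close> by (intro deviation_from_ray_le[OF G(1,2) K remainder _ y]) simp_all
    then have "norm (y - x - t *\<^sub>R d) \<le> 2 * m * norm (t *\<^sub>R d)"
      using \<open>K > 0\<close> \<open>m > 0\<close> m_half by (intro norm_diff_le_of_relative_error) simp_all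
    also have "\<dots> \<le> t * (m * (2 * (norm d + 1)))"
      using \<open>t > 0\<close> \<open>m > 0\<close> by (simp add: algebra_simps)
    also have "\<dots> \<le> \<epsilon> * t"
      using \<open>t > 0\<close> m_d by (simp add: mult.commute mult_left_mono)
    finally show ?thesis
      using y by blast
  qed
  have "\<Psi> x \<in> interior (\<Psi> ` ball x r)"
    using \<open>r > 0\<close> G linear_conv_bounded_linear
    by (intro sussmann_open_mapping[OF open_UNIV cont UNIV_I \<Psi>]) auto
  then have "\<forall>\<^sub>F t in at_right 0. \<Psi> x + t *\<^sub>R \<Psi>' d \<in> interior (\<Psi> ` ball x r)"
    by (intro topological_tendstoD) (auto intro!: tendsto_eq_intros)
  with eventually_at_right_less[of "0::real"] show ?thesis
    by eventually_elim (use preimage interior_subset in blast)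
qed

lemma equality_constraints_near_ray:
  fixes h :: "nat \<Rightarrow> 'a::euclidean_space \<Rightarrow> real" and a :: "nat \<Rightarrow> 'a"
  assumes h: "\<And>j. j < k \<Longrightarrow> (h j has_derivative (\<lambda>v. a j \<bullet> v)) (at x)"
    and cont: "\<And>j. j < k \<Longrightarrow> continuous_on UNIV (h j)"
    and inj: "inj_on a {..<k}" and indep: "independent (a ` {..<k})"
    and tangent: "\<And>j. j < k \<Longrightarrow> a j \<bullet> d = 0" and "\<epsilon> > 0"
  shows "\<forall>\<^sub>F t in at_right 0. \<exists>y. (\<forall>j<k. h j y = h j x) \<and> norm (y - x - t *\<^sub>R d) \<le> \<epsilon> * t"
proof -
  obtain P :: "'a \<Rightarrow> 'a" where "linear P" and inj_lin: "inj (\<lambda>v. (\<Sum>j<k. (a j \<bullet> v) *\<^sub>R a j) + P v)"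
    and coeffs_0: "\<And>c w j. (\<Sum>j<k. c j *\<^sub>R a j) = P w \<Longrightarrow> j < k \<Longrightarrow> c j = 0"
    by (rule independent_obtain_complement_map[OF inj indep]) auto
  (* \<Psi> puts the constraint values into the span of the gradients and adds P, which maps into their
     orthogonal complement; so \<Psi>' is invertible, and since \<Psi>' d = P d, solving
     \<Psi> y = \<Psi> x + t \<Psi>' d forces h j y = h j x. *)
  define \<Psi> where "\<Psi> y = (\<Sum>j<k. h j y *\<^sub>R a j) + P y" for y
  define \<Psi>' where "\<Psi>' v = (\<Sum>j<k. (a j \<bullet> v) *\<^sub>R a j) + P v" for v
  have \<Psi>: "(\<Psi> has_derivative \<Psi>') (at x)"
    unfolding \<Psi>_def[abs_def] \<Psi>'_def[abs_def] using \<open>linear P\<close>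
    by (intro has_derivative_add has_derivative_sum has_derivative_scaleR_left h
        bounded_linear_imp_has_derivative) (simp_all add: linear_conv_bounded_linear)
  have \<Psi>_cont: "continuous_on UNIV \<Psi>"
    unfolding \<Psi>_def[abs_def] using \<open>linear P\<close>
    by (intro continuous_intros cont linear_continuous_on) (simp_all add: linear_conv_bounded_linear)
  have \<Psi>'_inj: "inj \<Psi>'"
    using inj_lin by (simp add: \<Psi>'_def[abs_def])
  have near: "\<forall>\<^sub>F t in at_right 0. \<exists>y. \<Psi> y = \<Psi> x + t *\<^sub>R \<Psi>' d \<and> norm (y - x - t *\<^sub>R d) \<le> \<epsilon> * t"
    by (rule has_derivative_inj_preimage_near_ray[OF \<Psi>_cont \<Psi> \<Psi>'_inj \<open>\<epsilon> > 0\<close>])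
  have level: "\<forall>j<k. h j y = h j x" if "\<Psi> y = \<Psi> x + t *\<^sub>R \<Psi>' d" for y t
  proof -
    have "\<Psi>' d = P d"
      using tangent by (simp add: \<Psi>'_def)
    then have "(\<Sum>j<k. (h j y - h j x) *\<^sub>R a j) = P (x + t *\<^sub>R d - y)"
      using that \<open>linear P\<close>
      by (simp add: \<Psi>_def sum_subtractf linear_diff linear_add linear_scale algebra_simps)
    then show ?thesis
      using coeffs_0[of "\<lambda>j. h j y - h j x"] by simp
  qed
  from near show ?thesis
    by eventually_elim (use level in blast)
qed

section \<open>The linearized cone\<close>

definition linearized_cone ::
  "nat \<Rightarrow> (nat \<Rightarrow> 'a::euclidean_space \<Rightarrow> real) \<Rightarrow> nat \<Rightarrow> (nat \<Rightarrow> 'a \<Rightarrow> real) \<Rightarrow> 'a \<Rightarrow> 'a set" where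
  "linearized_cone m g k h x =
     {v. (\<forall>j<k. grad (h j) x \<bullet> v = 0) \<and> (\<forall>i\<in>active_set m g x. grad (g i) x \<bullet> v \<le> 0)}"

lemma tangent_cone_subset_linearized_cone:
  assumes g: "\<And>i. i < m \<Longrightarrow> g i differentiable (at x)"
    and h: "\<And>j. j < k \<Longrightarrow> h j differentiable (at x)"
    and x: "x \<in> feasible_set m g k h"
  shows "tangent_cone (feasible_set m g k h) x \<subseteq> linearized_cone m g k h x"
proof
  fix d
  assume d: "d \<in> tangent_cone (feasible_set m g k h) x"
  have "grad (h j) x \<bullet> d = 0" if "j < k" for j
  proof -
    have "grad (h j) x \<bullet> d \<le> 0"
      using d x that has_derivative_grad[OF h[OF that]]
      by (intro max_on_imp_inner_tangent_cone_le_0[where C = "feasible_set m g k h"])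
        (auto simp: feasible_set_def)
    moreover have "((\<lambda>y. - h j y) has_derivative (\<lambda>v. (- grad (h j) x) \<bullet> v)) (at x)"
      using has_derivative_minus[OF has_derivative_grad[OF h[OF that]]] by simp
    then have "(- grad (h j) x) \<bullet> d \<le> 0"
      using d x that
      by (intro max_on_imp_inner_tangent_cone_le_0[where C = "feasible_set m g k h"])
        (auto simp: feasible_set_def)
    ultimately show ?thesis
      by simp
  qed
  moreover have "grad (g i) x \<bullet> d \<le> 0" if "i \<in> active_set m g x" for i
  proof -
    have "i < m" "g i x = 0"
      using that by (simp_all add: active_set_def)
    then show ?thesis
      using d has_derivative_grad[OF g[OF \<open>i < m\<close>]]
      by (intro max_on_imp_inner_tangent_cone_le_0[where C = "feasible_set m g k h"])
        (auto simp: feasible_set_def)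
  qed
  ultimately show "d \<in> linearized_cone m g k h x"
    by (simp add: linearized_cone_def)
qed

lemma strictly_feasible_direction_in_tangent_cone:
  assumes g: "\<And>i. i < m \<Longrightarrow> g i differentiable (at x)"
    and h: "\<And>j. j < k \<Longrightarrow> h j differentiable (at x)"
    and h_cont: "\<And>j. j < k \<Longrightarrow> continuous_on UNIV (h j)"
    and x: "x \<in> feasible_set m g k h"
    and inj: "inj_on (\<lambda>j. grad (h j) x) {..<k}" and indep: "independent ((\<lambda>j. grad (h j) x) ` {..<k})"
    and tangent: "\<And>j. j < k \<Longrightarrow> grad (h j) x \<bullet> d = 0"
    and strict: "\<And>i. i \<in> active_set m g x \<Longrightarrow> grad (g i) x \<bullet> d < 0"
  shows "d \<in> tangent_cone (feasible_set m g k h) x"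
proof (rule tangent_coneI)
  fix \<eta> \<delta> :: real
  assume "\<eta> > 0" "\<delta> > 0"
  have "\<forall>i\<in>{..<m}. \<forall>\<^sub>F (\<epsilon>, t) in at_right 0 \<times>\<^sub>F at_right 0.
      \<forall>y. norm (y - x - t *\<^sub>R d) \<le> \<epsilon> * t \<longrightarrow> g i y \<le> 0"
    using x strict has_derivative_grad[OF g]
    by (intro ballI inequality_constraint_near_ray) (auto simp: feasible_set_def active_set_def)
  then have "\<forall>\<^sub>F (\<epsilon>, t) in at_right 0 \<times>\<^sub>F at_right 0.
      \<forall>y. norm (y - x - t *\<^sub>R d) \<le> \<epsilon> * t \<longrightarrow> (\<forall>i<m. g i y \<le> 0)"
    by (auto dest: eventually_ball_finite[OF finite_lessThan] elim!: eventually_mono)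
  then obtain \<epsilon> \<delta>' where \<epsilon>: "\<epsilon> \<in> {0<..<\<eta>}" and "\<delta>' > 0"
    and ineq: "\<And>t y. t \<in> {0<..<\<delta>'} \<Longrightarrow> norm (y - x - t *\<^sub>R d) \<le> \<epsilon> * t \<Longrightarrow> \<forall>i<m. g i y \<le> 0"
    using \<open>\<eta> > 0\<close> by (rule eventually_prod_at_right_0E) auto
  have "\<forall>\<^sub>F t in at_right 0. \<exists>y. (\<forall>j<k. h j y = h j x) \<and> norm (y - x - t *\<^sub>R d) \<le> \<epsilon> * t"
    using has_derivative_grad[OF h] h_cont inj indep tangent \<epsilon>
    by (intro equality_constraints_near_ray) auto
  moreover have "\<forall>\<^sub>F t in at_right 0. t \<in> {0<..<min \<delta> \<delta>'}"
    using \<open>\<delta> > 0\<close> \<open>\<delta>' > 0\<close> unfolding eventually_at_right_field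
    by (intro exI[of _ "min \<delta> \<delta>'"]) auto
  ultimately have "\<forall>\<^sub>F t in at_right 0. t \<in> {0<..<min \<delta> \<delta>'} \<and>
      (\<exists>y. (\<forall>j<k. h j y = h j x) \<and> norm (y - x - t *\<^sub>R d) \<le> \<epsilon> * t)"
    by eventually_elim blast
  then obtain t y where t: "t \<in> {0<..<min \<delta> \<delta>'}"
    and eq: "\<forall>j<k. h j y = h j x" and close: "norm (y - x - t *\<^sub>R d) \<le> \<epsilon> * t"
    using eventually_happens'[OF trivial_limit_at_right_real] by blast
  have "y \<in> feasible_set m g k h"
    using x eq ineq[of t y] t close by (simp add: feasible_set_def)
  moreover have "norm (y - x - t *\<^sub>R d) \<le> \<eta> * t"
    using close \<epsilon> t by (smt (verit) greaterThanLessThan_iff mult_right_mono)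
  ultimately show "\<exists>t\<in>{0<..<\<delta>}. \<exists>y\<in>feasible_set m g k h. norm (y - x - t *\<^sub>R d) \<le> \<eta> * t"
    using t by auto
qed

lemma linearized_cone_subset_tangent_cone:
  assumes g: "\<And>i. i < m \<Longrightarrow> g i differentiable (at x)"
    and h: "\<And>j. j < k \<Longrightarrow> h j differentiable (at x)"
    and h_cont: "\<And>j. j < k \<Longrightarrow> continuous_on UNIV (h j)"
    and x: "x \<in> feasible_set m g k h" and mfcq: "MFCQ m g k h x"
  shows "linearized_cone m g k h x \<subseteq> tangent_cone (feasible_set m g k h) x"
proof
  fix d
  assume d: "d \<in> linearized_cone m g k h x"
  obtain \<xi> where inj: "inj_on (\<lambda>j. grad (h j) x) {..<k}"
    and indep: "independent ((\<lambda>j. grad (h j) x) ` {..<k})"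
    and \<xi>_h: "\<And>j. j < k \<Longrightarrow> grad (h j) x \<bullet> \<xi> = 0"
    and \<xi>_g: "\<And>i. i \<in> active_set m g x \<Longrightarrow> grad (g i) x \<bullet> \<xi> < 0"
    using mfcq unfolding MFCQ_def by blast
  have in_tangent_cone: "d + s *\<^sub>R \<xi> \<in> tangent_cone (feasible_set m g k h) x" if "s > 0" for s
  proof (rule strictly_feasible_direction_in_tangent_cone[OF g h h_cont x inj indep])
    show "grad (h j) x \<bullet> (d + s *\<^sub>R \<xi>) = 0" if "j < k" for j
      using d \<xi>_h that by (simp add: linearized_cone_def inner_add_right)
    show "grad (g i) x \<bullet> (d + s *\<^sub>R \<xi>) < 0" if "i \<in> active_set m g x" for i
      using d \<xi>_g[OF that] \<open>s > 0\<close> that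
      by (simp add: linearized_cone_def inner_add_right add_nonpos_neg mult_pos_neg)
  qed
  have ev: "\<forall>\<^sub>F s in at_right 0. d + s *\<^sub>R \<xi> \<in> tangent_cone (feasible_set m g k h) x"
    using eventually_at_right_less[of "0::real"] by (rule eventually_mono) (rule in_tangent_cone)
  have "((\<lambda>s. d + s *\<^sub>R \<xi>) \<longlongrightarrow> d + 0 *\<^sub>R \<xi>) (at_right 0)"
    by (intro tendsto_intros)
  then have lim: "((\<lambda>s. d + s *\<^sub>R \<xi>) \<longlongrightarrow> d) (at_right 0)"
    by simp
  show "d \<in> tangent_cone (feasible_set m g k h) x"
    by (rule Lim_in_closed_set[OF closed_tangent_cone ev trivial_limit_at_right_real lim])
qed

lemma tangent_cone_eq_linearized_cone:
  assumes "\<And>i. i < m \<Longrightarrow> g i differentiable (at x)"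
    and "\<And>j. j < k \<Longrightarrow> h j differentiable (at x)"
    and "\<And>j. j < k \<Longrightarrow> continuous_on UNIV (h j)"
    and "x \<in> feasible_set m g k h" and "MFCQ m g k h x"
  shows "tangent_cone (feasible_set m g k h) x = linearized_cone m g k h x"
  by (rule subset_antisym[OF tangent_cone_subset_linearized_cone[OF assms(1,2,4)]
        linearized_cone_subset_tangent_cone[OF assms]])

section \<open>The quadratic subproblem\<close>

lemma the_min_half_sq_dist_eq_closest_point:
  fixes S :: "'a::euclidean_space set"
  assumes "closed S" "convex S" "S \<noteq> {}"
  shows "(THE \<xi>. \<xi> \<in> S \<and> (\<forall>\<eta>\<in>S. (1/2) * (norm (\<xi> + c))\<^sup>2 \<le> (1/2) * (norm (\<eta> + c))\<^sup>2)) =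
    closest_point S (- c)"
proof (rule the_equality)
  have dist_eq: "dist (- c) \<eta> = norm (\<eta> + c)" for \<eta>
    by (simp add: dist_norm norm_minus_commute)
  have min_iff: "(\<forall>\<eta>\<in>S. (1/2) * (norm (\<xi> + c))\<^sup>2 \<le> (1/2) * (norm (\<eta> + c))\<^sup>2) \<longleftrightarrow>
      (\<forall>\<eta>\<in>S. dist (- c) \<xi> \<le> dist (- c) \<eta>)" for \<xi>
    by (simp add: dist_eq)
  show "closest_point S (- c) \<in> S \<and>
      (\<forall>\<eta>\<in>S. (1/2) * (norm (closest_point S (- c) + c))\<^sup>2 \<le> (1/2) * (norm (\<eta> + c))\<^sup>2)"
    unfolding min_iff using closest_point_exists[OF assms(1,3)] by blast
  show "\<xi> = closest_point S (- c)"
    if "\<xi> \<in> S \<and> (\<forall>\<eta>\<in>S. (1/2) * (norm (\<xi> + c))\<^sup>2 \<le> (1/2) * (norm (\<eta> + c))\<^sup>2)" for \<xi>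
    using that unfolding min_iff by (intro closest_point_unique[OF assms(2,1)]) auto
qed

lemma closest_point_subset_eq:
  assumes "closed S" "T \<subseteq> S" "closed T" "convex T" "closest_point S z \<in> T"
  shows "closest_point T z = closest_point S z"
proof -
  have "S \<noteq> {}"
    using assms(2,5) by blast
  then have "\<forall>w\<in>T. dist z (closest_point S z) \<le> dist z w"
    using closest_point_exists(2)[OF \<open>closed S\<close>] \<open>T \<subseteq> S\<close> by blast
  then show ?thesis
    by (rule closest_point_unique[OF \<open>convex T\<close> \<open>closed T\<close> \<open>closest_point S z \<in> T\<close>, symmetric])
qed

lemma qp_feasible_eq_Int:
  "qp_feasible m g k h \<alpha> x =
     (\<Inter>i<m. {\<xi>. grad (g i) x \<bullet> \<xi> \<le> - \<alpha> * g i x}) \<inter> (\<Inter>j<k. {\<xi>. grad (h j) x \<bullet> \<xi> = - \<alpha> * h j x})"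
  by (auto simp: qp_feasible_def)

lemma closed_qp_feasible: "closed (qp_feasible m g k h \<alpha> x)"
  unfolding qp_feasible_eq_Int
  by (intro closed_Int closed_INT ballI closed_hyperplane closed_halfspace_le)

lemma convex_qp_feasible: "convex (qp_feasible m g k h \<alpha> x)"
  unfolding qp_feasible_eq_Int
  by (intro convex_Int convex_INT ballI convex_hyperplane convex_halfspace_le)

lemma zero_in_qp_feasible:
  "x \<in> feasible_set m g k h \<Longrightarrow> \<alpha> \<ge> 0 \<Longrightarrow> 0 \<in> qp_feasible m g k h \<alpha> x"
  by (auto simp: feasible_set_def qp_feasible_def mult_nonneg_nonpos)

lemma G_alpha_eq_closest_point:
  assumes "x \<in> feasible_set m g k h" "\<alpha> \<ge> 0"
  shows "G_alpha f m g k h \<alpha> x = closest_point (qp_feasible m g k h \<alpha> x) (- grad f x)"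
  unfolding G_alpha_def using zero_in_qp_feasible[OF assms]
  by (intro the_min_half_sq_dist_eq_closest_point closed_qp_feasible convex_qp_feasible) blast

lemma qp_feasible_subset_linearized_cone:
  "x \<in> feasible_set m g k h \<Longrightarrow> qp_feasible m g k h \<alpha> x \<subseteq> linearized_cone m g k h x"
  by (auto simp: feasible_set_def qp_feasible_def linearized_cone_def active_set_def)

lemma eventually_in_qp_feasible:
  assumes x: "x \<in> feasible_set m g k h" and p: "p \<in> linearized_cone m g k h x"
  shows "\<forall>\<^sub>F \<alpha> in at_top. p \<in> qp_feasible m g k h \<alpha> x"
proof -
  have "\<forall>\<^sub>F \<alpha> in at_top. grad (g i) x \<bullet> p \<le> - \<alpha> * g i x" if "i < m" for i
  proof (cases "g i x = 0")
    case True
    with p \<open>i < m\<close> show ?thesis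
      by (simp add: linearized_cone_def active_set_def)
  next
    case False
    with x \<open>i < m\<close> have "g i x < 0"
      by (simp add: feasible_set_def less_le)
    have "\<forall>\<^sub>F \<alpha> in at_top. grad (g i) x \<bullet> p / (- g i x) \<le> \<alpha>"
      by (rule eventually_ge_at_top)
    moreover have "grad (g i) x \<bullet> p \<le> - \<alpha> * g i x" if "grad (g i) x \<bullet> p / (- g i x) \<le> \<alpha>" for \<alpha>
    proof -
      have "grad (g i) x \<bullet> p \<le> \<alpha> * (- g i x)"
        using that \<open>g i x < 0\<close> by (simp only: pos_divide_le_eq neg_0_less_iff_less)
      then show ?thesis
        by simp
    qed
    ultimately show ?thesis
      by (rule eventually_mono)
  qed
  then have "\<forall>\<^sub>F \<alpha> in at_top. \<forall>i\<in>{..<m}. grad (g i) x \<bullet> p \<le> - \<alpha> * g i x"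
    by (intro eventually_ball_finite) auto
  then show ?thesis
    by eventually_elim (use x p in \<open>simp add: qp_feasible_def feasible_set_def linearized_cone_def\<close>)
qed

lemma closed_linearized_cone: "closed (linearized_cone m g k h x)"
proof -
  have "linearized_cone m g k h x = (\<Inter>j<k. {v. grad (h j) x \<bullet> v = 0}) \<inter>
      (\<Inter>i\<in>active_set m g x. {v. grad (g i) x \<bullet> v \<le> 0})"
    by (auto simp: linearized_cone_def)
  then show ?thesis
    by (simp add: closed_Int closed_INT closed_hyperplane closed_halfspace_le)
qed

lemma G_alpha_in_qp_feasible:
  assumes "x \<in> feasible_set m g k h" and "\<alpha> \<ge> 0"
  shows "G_alpha f m g k h \<alpha> x \<in> qp_feasible m g k h \<alpha> x"
proof -
  have "qp_feasible m g k h \<alpha> x \<noteq> {}"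
    using zero_in_qp_feasible[OF assms] by blast
  then show ?thesis
    unfolding G_alpha_eq_closest_point[OF assms] by (rule closest_point_in_set[OF closed_qp_feasible])
qed

lemma eventually_G_alpha_eq_closest_point:
  assumes x: "x \<in> feasible_set m g k h"
  shows "\<forall>\<^sub>F \<alpha> in at_top. G_alpha f m g k h \<alpha> x = closest_point (linearized_cone m g k h x) (- grad f x)"
proof -
  let ?p = "closest_point (linearized_cone m g k h x) (- grad f x)"
  have "0 \<in> linearized_cone m g k h x"
    by (simp add: linearized_cone_def)
  then have "?p \<in> linearized_cone m g k h x"
    using closest_point_in_set[OF closed_linearized_cone] by blast
  then have "\<forall>\<^sub>F \<alpha> in at_top. ?p \<in> qp_feasible m g k h \<alpha> x"
    by (rule eventually_in_qp_feasible[OF x])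
  with eventually_ge_at_top[of 0] show ?thesis
  proof eventually_elim
    case (elim \<alpha>)
    then show ?case
      using closest_point_subset_eq[OF closed_linearized_cone qp_feasible_subset_linearized_cone[OF x]
          closed_qp_feasible convex_qp_feasible]
      by (simp add: G_alpha_eq_closest_point[OF x])
  qed
qed

theorem mainTheorem5:
  fixes f :: "'a::euclidean_space \<Rightarrow> real"
    and g :: "nat \<Rightarrow> 'a \<Rightarrow> real" and h :: "nat \<Rightarrow> 'a \<Rightarrow> real"
    and m k :: nat and x :: 'a
  assumes "C1_fun f" and "\<forall>i<m. C1_fun (g i)" and "\<forall>j<k. C1_fun (h j)"
    and "x \<in> feasible_set m g k h"
    and "MFCQ m g k h x"
  shows "(\<forall>\<alpha>>0. G_alpha f m g k h \<alpha> x \<in> tangent_cone (feasible_set m g k h) x) \<and>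
         ((\<lambda>\<alpha>. G_alpha f m g k h \<alpha> x) \<longlongrightarrow>
            closest_point (tangent_cone (feasible_set m g k h) x) (- grad f x)) at_top"
proof -
  have T_eq: "tangent_cone (feasible_set m g k h) x = linearized_cone m g k h x"
    using assms(2-5)
    by (intro tangent_cone_eq_linearized_cone C1_fun_differentiable C1_fun_continuous_on) auto
  have "G_alpha f m g k h \<alpha> x \<in> linearized_cone m g k h x" if "\<alpha> > 0" for \<alpha>
    using that by (intro subsetD[OF qp_feasible_subset_linearized_cone G_alpha_in_qp_feasible] assms) simp_all
  moreover have "((\<lambda>\<alpha>. G_alpha f m g k h \<alpha> x) \<longlongrightarrow>
      closest_point (linearized_cone m g k h x) (- grad f x)) at_top"
    by (rule tendsto_eventually[OF eventually_G_alpha_eq_closest_point[OF assms(4)]])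
  ultimately show ?thesis
    unfolding T_eq by blast
qed

end
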